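(* Let $N\ge2$ and $(x,y)\in\mathbb{C}^N\times\mathbb{C}^{N-1}$. Then $(x,y)\in\mathbb{G}_{1,N}$ if and only if for every $w\in\overline{\mathbb{D}}$ one has $1-wx_1\neq0$ and \[ \left(\frac{y_1-wx_2}{1-wx_1},\dots,\frac{y_{N-1}-wx_N}{1-wx_1}\right)\in\mathbb{G}_{N-1}. \] In particular, if $(x,y)\in\mathbb{G}_{1,N}$ then $(y_1,\dots,y_{N-1})\in\mathbb{G}_{N-1}$ and $|y_1|<N-1$.
   Context: $\mathbb{D}$ is the open unit disc. $P_N(z;x):=\sum_{j=0}^{N-1}(-1)^jx_{j+1}z^j$, $Q_N(z;y):=1+\sum_{j=1}^{N-1}(-1)^jy_jz^j$, and $\mathbb{G}_{1,N}:=\{(x,y)\in\mathbb{C}^N\times\mathbb{C}^{N-1}: \text{the zero set of }(z,w)\mapsto Q_N(z;y)-wP_N(z;x)\text{ does not meet }\overline{\mathbb{D}}^2\}$. The symmetrized polydisc is $\mathbb{G}_m:=\{(s_1,\dots,s_m)\in\mathbb{C}^m: \text{all roots of } z^m+\sum_{j=1}^m(-1)^js_jz^{m-j}\text{ lie in }\mathbb{D}\}$. *)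

theory Defs
  imports "HOL-Analysis.Analysis"
begin

text \<open>Points of C^N are represented as functions nat => complex, only the
 entries with indices 1..N being relevant (x_1,...,x_N).\<close>

definition P_N :: "nat \<Rightarrow> (nat \<Rightarrow> complex) \<Rightarrow> complex \<Rightarrow> complex" where
  "P_N N x z = (\<Sum>j=0..<N. (-1)^j * x (j+1) * z^j)"

definition Q_N :: "nat \<Rightarrow> (nat \<Rightarrow> complex) \<Rightarrow> complex \<Rightarrow> complex" where
  "Q_N N y z = 1 + (\<Sum>j=1..<N. (-1)^j * y j * z^j)"

definition G1N :: "nat \<Rightarrow> (nat \<Rightarrow> complex) \<Rightarrow> (nat \<Rightarrow> complex) \<Rightarrow> bool" where
  "G1N N x y \<longleftrightarrow> (\<forall>z w. cmod z \<le> 1 \<longrightarrow> cmod w \<le> 1 \<longrightarrow> Q_N N y z - w * P_N N x z \<noteq> 0)"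

definition Gsym :: "nat \<Rightarrow> (nat \<Rightarrow> complex) \<Rightarrow> bool" where
  "Gsym m s \<longleftrightarrow> (\<forall>z. z^m + (\<Sum>j=1..m. (-1)^j * s j * z^(m-j)) = 0 \<longrightarrow> z \<in> ball 0 1)"

end

theory Submission
  imports Defs "HOL-Computational_Algebra.Fundamental_Theorem_Algebra"
begin

(* A point s lies in the symmetrized polydisc G_m iff the reversed
   characteristic polynomial  1 + sum_{j=1..m} (-1)^j s_j u^j  has no zero in the
   closed unit disc (roots z of the characteristic polynomial correspond to roots
   u = 1/z of the reversed one).  For fixed w with 1 - w x_1 <> 0 the pencil
   Q_N(z;y) - w P_N(z;x) is (1 - w x_1) times the reversed characteristic polynomial
   of the point ((y_j - w x_{j+1}) / (1 - w x_1))_j, while at z = 0 it equals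
   1 - w x_1.  Together these give the slice characterization of G_{1,N}; the slice
   w = 0 yields y in G_{N-1}.  Finally, for s in G_m (m >= 1), Vieta's formula writes
   s_1 as the sum of the m roots of the characteristic polynomial, each of modulus
   < 1, whence |s_1| < m. *)

definition rev_char_poly :: "nat \<Rightarrow> (nat \<Rightarrow> complex) \<Rightarrow> complex \<Rightarrow> complex" where
  "rev_char_poly m s u = 1 + (\<Sum>j=1..m. (-1)^j * s j * u^j)"

lemma char_poly_reversal:
  fixes s :: "nat \<Rightarrow> complex"
  assumes "z \<noteq> 0"
  shows "z^m + (\<Sum>j=1..m. (-1)^j * s j * z^(m-j)) = z^m * rev_char_poly m s (1/z)"
proof -
  have "z^m * (\<Sum>j=1..m. (-1)^j * s j * (1/z)^j) = (\<Sum>j=1..m. (-1)^j * s j * z^(m-j))"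
    unfolding sum_distrib_left
  proof (rule sum.cong[OF refl])
    fix j assume "j \<in> {1..m}"
    then have "z^m = z^(m-j) * z^j" by (simp add: power_add[symmetric])
    then show "z^m * ((-1)^j * s j * (1/z)^j) = (-1)^j * s j * z^(m-j)"
      using assms by (simp add: power_one_over field_simps)
  qed
  then show ?thesis by (simp add: rev_char_poly_def distrib_left)
qed

lemma Gsym_iff_rev_char_poly:
  "Gsym m s \<longleftrightarrow> (\<forall>u. cmod u \<le> 1 \<longrightarrow> rev_char_poly m s u \<noteq> 0)"
proof
  assume G: "Gsym m s"
  show "\<forall>u. cmod u \<le> 1 \<longrightarrow> rev_char_poly m s u \<noteq> 0"
  proof (intro allI impI notI)
    fix u assume u: "cmod u \<le> 1" and root: "rev_char_poly m s u = 0"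
    have "u \<noteq> 0" using root by (auto simp: rev_char_poly_def power_0_left)
    then have "1/u \<noteq> 0" and "1/(1/u) = u" by simp_all
    then have "(1/u)^m + (\<Sum>j=1..m. (-1)^j * s j * (1/u)^(m-j)) = 0"
      using char_poly_reversal[of "1/u" m s] root by simp
    then have "cmod (1/u) < 1" using G unfolding Gsym_def by auto
    moreover have "cmod (1/u) \<ge> 1" using u \<open>u \<noteq> 0\<close> by (simp add: norm_divide field_simps)
    ultimately show False by simp
  qed
next
  assume H: "\<forall>u. cmod u \<le> 1 \<longrightarrow> rev_char_poly m s u \<noteq> 0"
  show "Gsym m s" unfolding Gsym_def
  proof (intro allI impI)
    fix z assume root: "z^m + (\<Sum>j=1..m. (-1)^j * s j * z^(m-j)) = 0"
    show "z \<in> ball 0 1"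
    proof (cases "z = 0")
      case False
      then have "rev_char_poly m s (1/z) = 0" using char_poly_reversal[OF False, of m s] root by simp
      then have "cmod (1/z) > 1" using H by force
      then show ?thesis using False by (simp add: norm_divide field_simps)
    qed simp
  qed
qed

lemma pencil_at_zero:
  assumes "N \<ge> 1"
  shows "Q_N N y 0 - w * P_N N x 0 = 1 - w * x 1"
  using assms unfolding Q_N_def P_N_def
  by (simp add: power_0_left sum.atLeast_Suc_lessThan)

lemma pencil_factorization:
  assumes "N \<ge> 1" and nz: "1 - w * x 1 \<noteq> 0"
  shows "Q_N N y z - w * P_N N x z =
           (1 - w * x 1) * rev_char_poly (N - 1) (\<lambda>j. (y j - w * x (j+1)) / (1 - w * x 1)) z"
proof -
  have P: "P_N N x z = x 1 + (\<Sum>j=1..<N. (-1)^j * x (j+1) * z^j)"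
    unfolding P_N_def using assms(1) by (subst sum.atLeast_Suc_lessThan) auto
  have range: "{1..N-1} = {1..<N}" using assms(1) by auto
  have "(1 - w * x 1) * (\<Sum>j=1..N-1. (-1)^j * ((y j - w * x (j+1)) / (1 - w * x 1)) * z^j)
      = (\<Sum>j=1..<N. (-1)^j * y j * z^j) - w * (\<Sum>j=1..<N. (-1)^j * x (j+1) * z^j)"
    unfolding range sum_distrib_left sum_subtractf[symmetric]
    by (rule sum.cong) (use nz in \<open>auto simp: field_simps\<close>)
  then show ?thesis unfolding Q_N_def P rev_char_poly_def by (simp add: algebra_simps)
qed

lemma G1N_iff_slices:
  assumes "N \<ge> 1"
  shows "G1N N x y \<longleftrightarrow>
           (\<forall>w. cmod w \<le> 1 \<longrightarrow>
              1 - w * x 1 \<noteq> 0 \<and> Gsym (N - 1) (\<lambda>j. (y j - w * x (j+1)) / (1 - w * x 1)))"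
  (is "_ \<longleftrightarrow> (\<forall>w. _ \<longrightarrow> ?nz w \<and> Gsym (N - 1) (?s w))")
proof -
  have "(\<forall>z. cmod z \<le> 1 \<longrightarrow> Q_N N y z - w * P_N N x z \<noteq> 0) \<longleftrightarrow> ?nz w \<and> Gsym (N - 1) (?s w)"
    for w
  proof (cases "?nz w")
    case True
    then show ?thesis
      using pencil_factorization[where x=x and w=w and y=y, OF assms True]
      by (simp add: Gsym_iff_rev_char_poly)
  next
    case False
    then show ?thesis using pencil_at_zero[OF assms, of y w x] by force
  qed
  then show ?thesis unfolding G1N_def by blast
qed

lemma coeff_prod_linear_factors:
  fixes r :: "nat \<Rightarrow> complex"
  shows "coeff (\<Prod>i<Suc n. [:-r i, 1:]) n = - (\<Sum>i<Suc n. r i)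
         \<and> coeff (\<Prod>i<Suc n. [:-r i, 1:]) (Suc n) = 1"
proof (induction n)
  case 0 then show ?case by simp
next
  case (Suc n)
  let ?P = "\<Prod>i<Suc n. [:-r i, 1:]"
  have "degree ?P \<le> Suc n"
    by (rule order.trans[OF degree_prod_sum_le]) (simp_all add: o_def)
  then have top: "coeff ?P (Suc (Suc n)) = 0" by (intro coeff_eq_0) simp
  have "(\<Prod>i<Suc (Suc n). [:-r i, 1:]) = smult (-r (Suc n)) ?P + pCons 0 ?P"
    by (simp add: mult.commute)
  then show ?case using Suc top by simp
qed

definition char_poly :: "nat \<Rightarrow> (nat \<Rightarrow> complex) \<Rightarrow> complex poly" where
  "char_poly m s = monom 1 m + (\<Sum>j=1..m. monom ((-1)^j * s j) (m-j))"

lemma poly_char_poly: "poly (char_poly m s) z = z^m + (\<Sum>j=1..m. (-1)^j * s j * z^(m-j))"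
  by (simp add: char_poly_def poly_sum poly_monom)

lemma coeff_char_poly:
  "coeff (char_poly m s) k = (if k = m then 1 else if k < m then (-1)^(m-k) * s (m-k) else 0)"
proof -
  have sum_eq: "(\<Sum>j=1..m. if m - j = k then (-1)^j * s j else 0)
                = (if k < m then (-1)^(m-k) * s (m-k) else 0)"
  proof (cases "k < m")
    case True
    have "(\<Sum>j=1..m. if m - j = k then (-1)^j * s j else 0)
          = (\<Sum>j\<in>{1..m}. if j = m - k then (-1)^j * s j else 0)"
      by (rule sum.cong) (use True in auto)
    also have "\<dots> = (-1)^(m-k) * s (m-k)" using True by (subst sum.delta) auto
    finally show ?thesis using True by simp
  qed (auto intro!: sum.neutral)
  have "coeff (char_poly m s) k
        = (if k = m then 1 else 0) + (\<Sum>j=1..m. if m - j = k then (-1)^j * s j else 0)"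
    by (simp add: char_poly_def coeff_sum coeff_monom)
  then show ?thesis unfolding sum_eq by auto
qed

lemma degree_char_poly: "degree (char_poly m s) = m"
  by (rule antisym; (rule degree_le le_degree)) (simp_all add: coeff_char_poly)

lemma first_coord_sum_of_roots:
  assumes "m \<ge> 1"
  obtains r where "s 1 = (\<Sum>i<m. r i)"
    and "\<And>i. i < m \<Longrightarrow> poly (char_poly m s) (r i) = 0"
proof -
  obtain r where "smult (lead_coeff (char_poly m s)) (\<Prod>i<degree (char_poly m s). [:-r i, 1:])
                   = char_poly m s"
    by (rule complex_poly_decompose')
  then have factors: "(\<Prod>i<m. [:-r i, 1:]) = char_poly m s"
    by (simp add: degree_char_poly coeff_char_poly)
  obtain n where n: "m = Suc n" using assms by (cases m) auto
  have "- s 1 = coeff (char_poly m s) n" using n by (simp add: coeff_char_poly)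
  also have "\<dots> = coeff (\<Prod>i<Suc n. [:-r i, 1:]) n" using factors n by simp
  also have "\<dots> = - (\<Sum>i<m. r i)"
    using coeff_prod_linear_factors[of r n] n by (simp only:)
  finally have "s 1 = (\<Sum>i<m. r i)" by simp
  moreover have "poly (char_poly m s) (r i) = 0" if "i < m" for i
    unfolding factors[symmetric] poly_prod by (rule prod_zero) (use that in auto)
  ultimately show ?thesis using that by blast
qed

lemma Gsym_first_coord_bound:
  assumes m: "m \<ge> 1" and G: "Gsym m s"
  shows "cmod (s 1) < real m"
proof -
  obtain r where s1: "s 1 = (\<Sum>i<m. r i)" and roots: "\<And>i. i < m \<Longrightarrow> poly (char_poly m s) (r i) = 0"
    using first_coord_sum_of_roots[OF m] by blast
  have small: "cmod (r i) < 1" if "i < m" for i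
    using G roots[OF that] unfolding Gsym_def poly_char_poly by auto
  have "cmod (s 1) \<le> (\<Sum>i<m. cmod (r i))" unfolding s1 by (rule norm_sum)
  also have "\<dots> < (\<Sum>i<m. 1)"
    by (rule sum_strict_mono) (use m small in \<open>auto simp: lessThan_empty_iff\<close>)
  finally show ?thesis by simp
qed

theorem mainTheorem10:
  fixes N :: nat and x y :: "nat \<Rightarrow> complex"
  assumes "N \<ge> 2"
  shows "(G1N N x y \<longleftrightarrow>
           (\<forall>w. cmod w \<le> 1 \<longrightarrow>
              1 - w * x 1 \<noteq> 0 \<and>
              Gsym (N - 1) (\<lambda>j. (y j - w * x (j+1)) / (1 - w * x 1))))
         \<and> (G1N N x y \<longrightarrow> Gsym (N - 1) y \<and> cmod (y 1) < real (N - 1))"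
proof -
  have slices: "G1N N x y \<longleftrightarrow>
           (\<forall>w. cmod w \<le> 1 \<longrightarrow>
              1 - w * x 1 \<noteq> 0 \<and> Gsym (N - 1) (\<lambda>j. (y j - w * x (j+1)) / (1 - w * x 1)))"
    using assms by (intro G1N_iff_slices) simp
  have "Gsym (N - 1) y \<and> cmod (y 1) < real (N - 1)" if "G1N N x y"
  proof -
    have "Gsym (N - 1) (\<lambda>j. (y j - 0 * x (j+1)) / (1 - 0 * x 1))"
      using slices that by (metis norm_zero zero_le_one)
    then have "Gsym (N - 1) y" by simp
    then show ?thesis using Gsym_first_coord_bound[of "N - 1" y] assms by simp
  qed
  with slices show ?thesis by blast
qed

end
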